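(* Let $m\ge1$, $y\in\mathbb{R}^{2m+1}_+$ with $c:=\sqrt{\sum_{i=0}^{2m}y_i}>0$, and let $(x^t)_{t\ge0}$ be generated by $$x^{t+1}_j=x^t_j\,\frac1c\sum_{\ell=0}^m\frac{x^t_\ell\,y_{\ell+j}}{(x^t*x^t)_{\ell+j}},\qquad j=0,\dots,m,$$ from an initial $x^0\in\mathbb{R}^{m+1}_+$. Let $x^\infty$ be a limit point of $(x^t)$ and assume that $t\mapsto\mathcal{I}(x^\infty\|x^t)$ is decreasing. Then $x^t\to x^\infty$, and $x^\infty$ is the unique limit point of $(x^t)$.
   Context: For $x\in\mathbb{R}^{m+1}$ set $x_k=0$ for $k<0$, $k>m$, and $(x*x)_i=\sum_{j=0}^i x_{i-j}x_j$ for $i=0,\dots,2m$. For nonnegative vectors $u,v$ of equal length, $\mathcal{I}(u\|v)=\sum_i\big(u_i\log\frac{u_i}{v_i}-u_i+v_i\big)$ (convention $0\log0=0$; $+\infty$ if some $u_i>0=v_i$). The iteration is assumed well-defined (denominators positive, e.g. $x^0>0$). *)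

theory Defs
  imports Complex_Main "HOL-Library.Extended_Real"
begin

text \<open>Vectors in R^(m+1) are represented as functions nat => real, only indices 0..m matter;
  entries outside 0..m are treated as 0 by the definitions below.\<close>

definition selfconv :: "nat \<Rightarrow> (nat \<Rightarrow> real) \<Rightarrow> nat \<Rightarrow> real" where
  "selfconv m x i = (\<Sum>j = 0..i. (if i - j \<le> m \<and> j \<le> m then x (i - j) * x j else 0))"

definition idiv_term :: "real \<Rightarrow> real \<Rightarrow> real" where
  "idiv_term u v = (if u = 0 then v else u * ln (u / v) - u + v)"

definition idiv :: "nat \<Rightarrow> (nat \<Rightarrow> real) \<Rightarrow> (nat \<Rightarrow> real) \<Rightarrow> ereal" where
  "idiv m u v = (if \<exists>i\<le>m. u i > 0 \<and> v i = 0 then \<infinity>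
                 else ereal (\<Sum>i = 0..m. idiv_term (u i) (v i)))"

definition limit_point :: "nat \<Rightarrow> (nat \<Rightarrow> nat \<Rightarrow> real) \<Rightarrow> (nat \<Rightarrow> real) \<Rightarrow> bool" where
  "limit_point m x z \<longleftrightarrow> (\<exists>r. strict_mono r \<and> (\<forall>j\<le>m. (\<lambda>k. x (r k) j) \<longlonglongrightarrow> z j))"

end

theory Submission
  imports Defs
begin

text \<open>The multiplicative update keeps the iterates nonnegative, and this is all that is used
  about it. Each summand of the I-divergence dominates the squared difference of square roots,
  so \<open>\<I>(x\<^sup>\<infinity>\<parallel>x\<^sup>t) \<rightarrow> 0\<close> forces \<open>x\<^sup>t \<rightarrow> x\<^sup>\<infinity>\<close>. Along a subsequence converging to
  \<open>x\<^sup>\<infinity>\<close> the divergence tends to \<open>\<I>(x\<^sup>\<infinity>\<parallel>x\<^sup>\<infinity>) = 0\<close>, and since it is decreasing in \<open>t\<close>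
  it tends to \<open>0\<close> along the whole sequence.\<close>

lemma idiv_term_ge_sqrt_diff_sq:
  fixes u v :: real
  assumes "u \<ge> 0" "v \<ge> 0" "u > 0 \<Longrightarrow> v > 0"
  shows "(sqrt u - sqrt v)\<^sup>2 \<le> idiv_term u v"
proof (cases "u = 0")
  case True
  then show ?thesis using assms by (simp add: idiv_term_def)
next
  case False
  then have "u > 0" "v > 0" using assms by auto
  define a b where "a = sqrt u" and "b = sqrt v"
  have a: "a > 0" "u = a\<^sup>2" and b: "b > 0" "v = b\<^sup>2"
    using \<open>u > 0\<close> \<open>v > 0\<close> by (auto simp: a_def b_def)
  have "ln (u / v) = - 2 * ln (b / a)"
    using a b by (simp add: ln_div ln_realpow)
  moreover have "ln (b / a) \<le> b / a - 1"
    using a b by (intro ln_le_minus_one) simp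
  ultimately have "u * (2 - 2 * (b / a)) \<le> u * ln (u / v)"
    using \<open>u > 0\<close> by (intro mult_left_mono) auto
  moreover have "u * (2 - 2 * (b / a)) = 2 * u - 2 * a * b"
    using a by (simp add: power2_eq_square field_simps)
  moreover have "(sqrt u - sqrt v)\<^sup>2 = u - 2 * a * b + v"
    using \<open>u > 0\<close> \<open>v > 0\<close> by (simp add: a_def b_def power2_diff)
  ultimately show ?thesis
    using False by (simp add: idiv_term_def)
qed

lemma sqrt_diff_sq_le_idiv:
  assumes "\<forall>i\<le>m. u i \<ge> 0 \<and> v i \<ge> 0" and "j \<le> m"
  shows "ereal ((sqrt (u j) - sqrt (v j))\<^sup>2) \<le> idiv m u v"
proof (cases "\<exists>i\<le>m. u i > 0 \<and> v i = 0")
  case False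
  then have hellinger: "(sqrt (u i) - sqrt (v i))\<^sup>2 \<le> idiv_term (u i) (v i)" if "i \<le> m" for i
    using assms(1) that by (intro idiv_term_ge_sqrt_diff_sq) force+
  then have "idiv_term (u j) (v j) \<le> (\<Sum>i = 0..m. idiv_term (u i) (v i))"
    using \<open>j \<le> m\<close> by (intro member_le_sum) (auto intro: order_trans[OF zero_le_power2])
  then show ?thesis
    using False hellinger[OF \<open>j \<le> m\<close>] by (simp add: idiv_def)
qed (simp add: idiv_def)

lemma tendsto_idiv_term_self:
  fixes f :: "nat \<Rightarrow> real"
  assumes "u \<ge> 0" and "f \<longlonglongrightarrow> u"
  shows "(\<lambda>k. idiv_term u (f k)) \<longlonglongrightarrow> 0"
proof (cases "u = 0")
  case True
  then show ?thesis using assms(2) by (simp add: idiv_term_def)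
next
  case False
  have "(\<lambda>k. u * ln (u / f k) - u + f k) \<longlonglongrightarrow> u * ln (u / u) - u + u"
    using assms False by (intro tendsto_intros) auto
  then show ?thesis using False by (simp add: idiv_term_def)
qed

lemma tendsto_idiv_self:
  assumes "\<forall>j\<le>m. u j \<ge> 0" and "\<forall>j\<le>m. (\<lambda>k. v k j) \<longlonglongrightarrow> u j"
  shows "(\<lambda>k. idiv m u (v k)) \<longlonglongrightarrow> 0"
proof -
  have "eventually (\<lambda>k. \<forall>i\<in>{i. i \<le> m \<and> u i > 0}. v k i > 0) sequentially"
    using assms(2) by (intro eventually_ball_finite) (auto intro: order_tendstoD)
  then have "eventually (\<lambda>k. ereal (\<Sum>i = 0..m. idiv_term (u i) (v k i)) = idiv m u (v k))
      sequentially"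
    by eventually_elim (force simp: idiv_def)
  moreover have "(\<lambda>k. \<Sum>i = 0..m. idiv_term (u i) (v k i)) \<longlonglongrightarrow> (\<Sum>i = 0..m. 0)"
    using assms by (intro tendsto_sum tendsto_idiv_term_self) auto
  ultimately show ?thesis
    by (auto intro: Lim_transform_eventually simp: zero_ereal_def)
qed

lemma decseq_tendsto_of_subseq_tendsto:
  fixes f :: "nat \<Rightarrow> 'a::{complete_linorder, linorder_topology}"
  assumes "decseq f" and "strict_mono r" and "(f \<circ> r) \<longlonglongrightarrow> L"
  shows "f \<longlonglongrightarrow> L"
proof -
  have f_lim: "f \<longlonglongrightarrow> (INF i. f i)" using assms(1) by (rule LIMSEQ_INF)
  then have "(f \<circ> r) \<longlonglongrightarrow> (INF i. f i)" using assms(2) by (rule LIMSEQ_subseq_LIMSEQ)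
  then have "(INF i. f i) = L" using assms(3) by (rule LIMSEQ_unique)
  with f_lim show ?thesis by simp
qed

lemma limit_point_nonneg:
  assumes "\<forall>t. \<forall>j\<le>m. x t j \<ge> 0" and "limit_point m x z" and "j \<le> m"
  shows "z j \<ge> 0"
proof -
  from assms(2,3) obtain r where "(\<lambda>k. x (r k) j) \<longlonglongrightarrow> z j"
    unfolding limit_point_def by blast
  then show ?thesis by (rule LIMSEQ_le_const) (use assms(1,3) in auto)
qed

lemma limit_point_unique:
  assumes "\<forall>j\<le>m. (\<lambda>t. x t j) \<longlonglongrightarrow> z j" and "limit_point m x w" and "j \<le> m"
  shows "w j = z j"
proof -
  from assms(2,3) obtain r where r: "strict_mono r" and "(\<lambda>k. x (r k) j) \<longlonglongrightarrow> w j"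
    unfolding limit_point_def by blast
  moreover have "(\<lambda>k. x (r k) j) \<longlonglongrightarrow> z j"
    using LIMSEQ_subseq_LIMSEQ[OF assms(1)[rule_format, OF assms(3)] r] by (simp add: comp_def)
  ultimately show ?thesis by (blast intro: LIMSEQ_unique)
qed

lemma tendsto_of_idiv_tendsto_zero:
  assumes nonneg: "\<forall>t. \<forall>i\<le>m. x t i \<ge> 0" and z_nonneg: "\<forall>i\<le>m. z i \<ge> 0"
    and idiv_lim: "(\<lambda>t. idiv m z (x t)) \<longlonglongrightarrow> 0" and "j \<le> m"
  shows "(\<lambda>t. x t j) \<longlonglongrightarrow> z j"
proof -
  have hellinger: "ereal ((sqrt (z j) - sqrt (x t j))\<^sup>2) \<le> idiv m z (x t)" for t
    using nonneg z_nonneg \<open>j \<le> m\<close> by (intro sqrt_diff_sq_le_idiv) auto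
  have "(\<lambda>t. ereal ((sqrt (z j) - sqrt (x t j))\<^sup>2)) \<longlonglongrightarrow> 0"
    by (rule tendsto_sandwich[OF _ _ tendsto_const idiv_lim]) (use hellinger in auto)
  then have "(\<lambda>t. sqrt ((sqrt (z j) - sqrt (x t j))\<^sup>2)) \<longlonglongrightarrow> sqrt 0"
    by (intro tendsto_real_sqrt) (simp add: zero_ereal_def)
  then have "(\<lambda>t. sqrt (z j) - sqrt (x t j)) \<longlonglongrightarrow> 0"
    by (simp add: tendsto_rabs_zero_iff)
  then have "(\<lambda>t. (sqrt (z j) - (sqrt (z j) - sqrt (x t j)))\<^sup>2) \<longlonglongrightarrow> (sqrt (z j) - 0)\<^sup>2"
    by (intro tendsto_power tendsto_diff tendsto_const)
  then show ?thesis
    using nonneg z_nonneg \<open>j \<le> m\<close> by simp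
qed

lemma idiv_decreasing_limit_point_imp_tendsto:
  assumes nonneg: "\<forall>t. \<forall>j\<le>m. x t j \<ge> 0" and lim: "limit_point m x z"
    and decr: "\<forall>t. idiv m z (x (Suc t)) \<le> idiv m z (x t)" and "j \<le> m"
  shows "(\<lambda>t. x t j) \<longlonglongrightarrow> z j"
proof -
  have z_nonneg: "\<forall>i\<le>m. z i \<ge> 0"
    using nonneg lim by (blast intro: limit_point_nonneg)
  from lim obtain r where r: "strict_mono r" and "\<forall>i\<le>m. (\<lambda>k. x (r k) i) \<longlonglongrightarrow> z i"
    unfolding limit_point_def by blast
  then have "((\<lambda>t. idiv m z (x t)) \<circ> r) \<longlonglongrightarrow> 0"
    using z_nonneg by (simp add: comp_def tendsto_idiv_self)
  with decr r have "(\<lambda>t. idiv m z (x t)) \<longlonglongrightarrow> 0"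
    by (simp add: decseq_tendsto_of_subseq_tendsto decseq_Suc_iff)
  then show ?thesis
    by (rule tendsto_of_idiv_tendsto_zero[OF nonneg z_nonneg _ \<open>j \<le> m\<close>])
qed

lemma deconvolution_update_nonneg:
  assumes "\<forall>i\<le>m. v i \<ge> 0" and "\<forall>i\<le>2*m. y i \<ge> 0" and "c > 0"
    and "\<forall>l\<le>m. selfconv m v (l + j) > 0" and "j \<le> m"
  shows "v j * (1 / c) * (\<Sum>l = 0..m. v l * y (l + j) / selfconv m v (l + j)) \<ge> 0"
  using assms by (intro mult_nonneg_nonneg sum_nonneg divide_nonneg_pos) auto

theorem proposition7:
  fixes m :: nat and y :: "nat \<Rightarrow> real" and x :: "nat \<Rightarrow> nat \<Rightarrow> real"
    and c :: real and xinf :: "nat \<Rightarrow> real"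
  assumes m: "m \<ge> 1"
    and y_nonneg: "\<forall>i\<le>2*m. y i \<ge> 0"
    and c_def: "c = sqrt (\<Sum>i = 0..2*m. y i)"
    and c_pos: "c > 0"
    and x0_nonneg: "\<forall>j\<le>m. x 0 j \<ge> 0"
    and well_def: "\<forall>t l j. l \<le> m \<longrightarrow> j \<le> m \<longrightarrow> selfconv m (x t) (l + j) > 0"
    and iter: "\<forall>t j. j \<le> m \<longrightarrow>
        x (Suc t) j = x t j * (1 / c) * (\<Sum>l = 0..m. x t l * y (l + j) / selfconv m (x t) (l + j))"
    and lim: "limit_point m x xinf"
    and decr: "\<forall>t. idiv m xinf (x (Suc t)) \<le> idiv m xinf (x t)"
  shows "(\<forall>j\<le>m. (\<lambda>t. x t j) \<longlonglongrightarrow> xinf j)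
       \<and> (\<forall>z. limit_point m x z \<longrightarrow> (\<forall>j\<le>m. z j = xinf j))"
proof -
  have nonneg: "\<forall>j\<le>m. x t j \<ge> 0" for t
  proof (induction t)
    case 0
    then show ?case using x0_nonneg .
  next
    case (Suc t)
    show ?case
    proof (intro allI impI)
      fix j
      assume "j \<le> m"
      then have "x (Suc t) j = x t j * (1 / c) *
          (\<Sum>l = 0..m. x t l * y (l + j) / selfconv m (x t) (l + j))"
        using iter by blast
      also have "\<dots> \<ge> 0"
        using Suc y_nonneg c_pos well_def \<open>j \<le> m\<close> by (intro deconvolution_update_nonneg) auto
      finally show "x (Suc t) j \<ge> 0" .
    qed
  qed
  have "\<forall>j\<le>m. (\<lambda>t. x t j) \<longlonglongrightarrow> xinf j"
    using nonneg lim decr by (blast intro: idiv_decreasing_limit_point_imp_tendsto)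
  then show ?thesis by (blast intro: limit_point_unique)
qed

end
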